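(* Let $S_1,\ldots,S_m,S_{m+1},F$ be propositional formulae. If $[S_1,\ldots,S_m,F] \equiv [S_1,\ldots,S_m]$, then $[S_1,\ldots,S_m,S_{m+1},F] \equiv [S_1,\ldots,S_m,S_{m+1}]$.
   Context: Models are truth assignments. For a formula $G$: $I \leq_G J$ iff $I \models G$ or $J \not\models G$. For a sequence $S=[S_1,\ldots,S_m]$: $I \leq_S J$ iff either $S=[]$, or ($I \leq_{S_1} J$ and (either $J \not\leq_{S_1} I$ or $I \leq_R J$)), where $R=[S_2,\ldots,S_m]$. For sequences, $S\equiv R$ means $I \leq_S J$ and $I\leq_R J$ coincide for all pairs of models $I,J$. *)

theory Defs
  imports Main
begin

datatype 'a form =
    Atom 'a
  | Bot
  | Top
  | Neg "'a form"
  | Conj "'a form" "'a form"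
  | Disj "'a form" "'a form"
  | Imp "'a form" "'a form"

type_synonym 'a model = "'a \<Rightarrow> bool"

fun models :: "'a model \<Rightarrow> 'a form \<Rightarrow> bool" where
  "models I (Atom p) = I p"
| "models I Bot = False"
| "models I Top = True"
| "models I (Neg F) = (\<not> models I F)"
| "models I (Conj F G) = (models I F \<and> models I G)"
| "models I (Disj F G) = (models I F \<or> models I G)"
| "models I (Imp F G) = (models I F \<longrightarrow> models I G)"

definition le_form :: "'a form \<Rightarrow> 'a model \<Rightarrow> 'a model \<Rightarrow> bool" where
  "le_form G I J \<longleftrightarrow> models I G \<or> \<not> models J G"

fun le_seq :: "'a form list \<Rightarrow> 'a model \<Rightarrow> 'a model \<Rightarrow> bool" where
  "le_seq [] I J = True"
| "le_seq (S1 # R) I J =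
     (le_form S1 I J \<and> (\<not> le_form S1 J I \<or> le_seq R I J))"

definition seq_equiv :: "'a form list \<Rightarrow> 'a form list \<Rightarrow> bool" where
  "seq_equiv S R \<longleftrightarrow> (\<forall>I J. le_seq S I J = le_seq R I J)"

end

theory Submission
  imports Defs
begin

(* Appending F to S changes nothing exactly when F cannot distinguish models
   that S ranks as equivalent. Equivalence under S @ [G] implies equivalence
   under S, so this property is inherited when a formula is inserted before F. *)

lemma le_seq_append:
  "le_seq (S @ T) I J \<longleftrightarrow> le_seq S I J \<and> (\<not> le_seq S J I \<or> le_seq T I J)"
  by (induction S) (auto simp: le_form_def)

lemma le_seq_append_equivD:
  assumes "le_seq (S @ T) I J" and "le_seq (S @ T) J I"
  shows "le_seq S I J \<and> le_seq S J I"
  using assms by (simp add: le_seq_append)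

lemma seq_equiv_snoc_iff:
  "seq_equiv (S @ [F]) S \<longleftrightarrow> (\<forall>I J. le_seq S I J \<longrightarrow> le_seq S J I \<longrightarrow> le_form F I J)"
  unfolding seq_equiv_def by (auto simp: le_seq_append)

theorem theorem5:
  fixes S :: "'a form list" and Sm1 F :: "'a form"
  assumes "seq_equiv (S @ [F]) S"
  shows "seq_equiv (S @ [Sm1, F]) (S @ [Sm1])"
proof -
  have "le_form F I J" if "le_seq (S @ [Sm1]) I J" and "le_seq (S @ [Sm1]) J I" for I J
    using assms le_seq_append_equivD[OF that] by (simp add: seq_equiv_snoc_iff)
  then have "seq_equiv ((S @ [Sm1]) @ [F]) (S @ [Sm1])"
    unfolding seq_equiv_snoc_iff by blast
  then show ?thesis
    by simp
qed

end
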